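(* Let $C$ be a parity complex. For every $x\in C$, $$x^{++}\cap x^{--}=x^{-+}\cap x^{+-}=\emptyset,$$ $$x^{-\mp}=x^{+\mp}=x^{--}\cap x^{+-},$$ $$x^{-\pm}=x^{+\pm}=x^{-+}\cap x^{++}.$$
   Context: A parity complex consists of a set $C=\bigsqcup_{n\ge 0}C_n$ graded by dimension, together with, for each $n\ge 0$ and each $x\in C_{n+1}$, two disjoint, non-empty, finite subsets $x^-,x^+\subseteq C_n$ (for $x\in C_0$ put $x^-=x^+=\emptyset$), subject to Axioms 1, 2, 3A, 3B below. Notation: for $S\subseteq C$, $S^-=\bigcup_{w\in S}w^-$ and $S^+=\bigcup_{w\in S}w^+$; iterated faces are written $x^{-+}=(x^-)^+$, $x^{++}=(x^+)^+$, etc. Also $S^\mp=S^-\setminus S^+$ and $S^\pm=S^+\setminus S^-$, and $x^{-\mp}=(x^-)^\mp$, $x^{+\pm}=(x^+)^\pm$, etc. For $S,T\subseteq C$ write $S\perp T$ when $S^-\cap T^-=\emptyset$ and $S^+\cap T^+=\emptyset$; for elements, $x\perp y$ means $\{x\}\perp\{y\}$. With $S_n=S\cap C_n$, a set $S\subseteq C$ is well-formed when $S_0$ has at most one element and for every $n>0$ and all $x,y\in S_n$ with $x\ne y$ we have $x\perp y$. Write $x<y$ when $x^+\cap y^-\neq\emptyset$, and let $\lhd$ be the reflexive transitive closure of $<$. Axioms: (1) for all $x$, $x^{++}\cup x^{--}=x^{-+}\cup x^{+-}$; (2) for all $x$, $x^-$ and $x^+$ are well-formed; (3A) $x\lhd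 y$ and $y\lhd x$ imply $x=y$; (3B) if $x\lhd y$ then there is no $z\in C$ with $x\in z^+$ and $y\in z^-$, and no $z\in C$ with $y\in z^+$ and $x\in z^-$. *)

theory Defs
  imports Main
begin

text \<open>A graded set is given by a carrier C :: 'a set and a dimension function dim;
  C_n = {x \<in> C. dim x = n}. The face maps are mn x (= x^-) and pl x (= x^+).\<close>

definition setmn :: "('a \<Rightarrow> 'a set) \<Rightarrow> 'a set \<Rightarrow> 'a set" where
  "setmn mn S = (\<Union>w\<in>S. mn w)"          (* S^- ; used also for S^+ with pl *)

definition perp :: "('a \<Rightarrow> 'a set) \<Rightarrow> ('a \<Rightarrow> 'a set) \<Rightarrow> 'a set \<Rightarrow> 'a set \<Rightarrow> bool" where
  "perp mn pl S T \<longleftrightarrow> setmn mn S \<inter> setmn mn T = {} \<and> setmn pl S \<inter> setmn pl T = {}"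

definition well_formed ::
  "('a \<Rightarrow> nat) \<Rightarrow> ('a \<Rightarrow> 'a set) \<Rightarrow> ('a \<Rightarrow> 'a set) \<Rightarrow> 'a set \<Rightarrow> bool" where
  "well_formed dim mn pl S \<longleftrightarrow>
     card {x\<in>S. dim x = 0} \<le> 1 \<and> finite {x\<in>S. dim x = 0} \<and>
     (\<forall>n>0. \<forall>x\<in>S. \<forall>y\<in>S. dim x = n \<and> dim y = n \<and> x \<noteq> y \<longrightarrow> perp mn pl {x} {y})"

definition cless :: "('a \<Rightarrow> 'a set) \<Rightarrow> ('a \<Rightarrow> 'a set) \<Rightarrow> 'a \<Rightarrow> 'a \<Rightarrow> bool" where
  "cless mn pl x y \<longleftrightarrow> pl x \<inter> mn y \<noteq> {}"

definition ctri :: "'a set \<Rightarrow> ('a \<Rightarrow> 'a set) \<Rightarrow> ('a \<Rightarrow> 'a set) \<Rightarrow> 'a \<Rightarrow> 'a \<Rightarrow> bool" where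
  "ctri C mn pl = (\<lambda>x y. x \<in> C \<and> y \<in> C \<and> cless mn pl x y)\<^sup>*\<^sup>*"

definition parity_complex ::
  "'a set \<Rightarrow> ('a \<Rightarrow> nat) \<Rightarrow> ('a \<Rightarrow> 'a set) \<Rightarrow> ('a \<Rightarrow> 'a set) \<Rightarrow> bool" where
  "parity_complex C dim mn pl \<longleftrightarrow>
     \<comment> \<open>face data\<close>
     (\<forall>x\<in>C. dim x = 0 \<longrightarrow> mn x = {} \<and> pl x = {}) \<and>
     (\<forall>x\<in>C. \<forall>n. dim x = Suc n \<longrightarrow>
         mn x \<subseteq> {y\<in>C. dim y = n} \<and> pl x \<subseteq> {y\<in>C. dim y = n} \<and>
         mn x \<inter> pl x = {} \<and> mn x \<noteq> {} \<and> pl x \<noteq> {} \<and> finite (mn x) \<and> finite (pl x)) \<and>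
     \<comment> \<open>Axiom 1\<close>
     (\<forall>x\<in>C. setmn pl (pl x) \<union> setmn mn (mn x) = setmn pl (mn x) \<union> setmn mn (pl x)) \<and>
     \<comment> \<open>Axiom 2\<close>
     (\<forall>x\<in>C. well_formed dim mn pl (mn x) \<and> well_formed dim mn pl (pl x)) \<and>
     \<comment> \<open>Axiom 3A\<close>
     (\<forall>x\<in>C. \<forall>y\<in>C. ctri C mn pl x y \<and> ctri C mn pl y x \<longrightarrow> x = y) \<and>
     \<comment> \<open>Axiom 3B\<close>
     (\<forall>x\<in>C. \<forall>y\<in>C. ctri C mn pl x y \<longrightarrow>
         \<not> (\<exists>z\<in>C. x \<in> pl z \<and> y \<in> mn z) \<and> \<not> (\<exists>z\<in>C. y \<in> pl z \<and> x \<in> mn z))"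

end

theory Submission
  imports Defs
begin

text \<open>Axiom 1 says that \<open>x\<^sup>+\<^sup>+ \<union> x\<^sup>-\<^sup>-\<close> and \<open>x\<^sup>-\<^sup>+ \<union> x\<^sup>+\<^sup>-\<close> coincide. Axiom 3B,
  applied to two faces of \<open>x\<close> of opposite signs, forbids \<open>y < z\<close> between them, so both
  unions are disjoint; all the identities then follow by set algebra.\<close>

lemma union_eq_disjoint_diff:
  assumes "A \<union> B = C \<union> D" and "A \<inter> B = {}" and "C \<inter> D = {}"
  shows "B - C = B \<inter> D" and "D - A = B \<inter> D" and "C - B = C \<inter> A" and "A - D = C \<inter> A"
  using assms by blast+

lemma parity_complex_faces_subset:
  assumes "parity_complex C dim mn pl" and "x \<in> C"
  shows "mn x \<subseteq> C \<and> pl x \<subseteq> C"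
proof (cases "dim x")
  case 0
  then show ?thesis using assms unfolding parity_complex_def by auto
next
  case (Suc n)
  then show ?thesis using assms unfolding parity_complex_def by blast
qed

lemma parity_complex_opposite_faces_not_less:
  assumes pc: "parity_complex C dim mn pl" and "x \<in> C"
    and faces: "y \<in> pl x \<and> z \<in> mn x \<or> y \<in> mn x \<and> z \<in> pl x"
  shows "pl y \<inter> mn z = {}"
proof (rule ccontr)
  assume "pl y \<inter> mn z \<noteq> {}"
  moreover have "y \<in> C" "z \<in> C"
    using faces parity_complex_faces_subset[OF pc \<open>x \<in> C\<close>] by auto
  ultimately have "ctri C mn pl y z"
    unfolding ctri_def cless_def by (intro r_into_rtranclp) simp
  with pc \<open>x \<in> C\<close> \<open>y \<in> C\<close> \<open>z \<in> C\<close> faces show False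
    unfolding parity_complex_def by blast
qed

lemma parity_complex_double_faces_disjoint:
  assumes pc: "parity_complex C dim mn pl" and "x \<in> C"
  shows "setmn pl (pl x) \<inter> setmn mn (mn x) = {}"
    and "setmn pl (mn x) \<inter> setmn mn (pl x) = {}"
  using parity_complex_opposite_faces_not_less[OF assms] unfolding setmn_def by blast+

theorem proposition1p1:
  fixes C :: "'a set" and dim :: "'a \<Rightarrow> nat" and mn pl :: "'a \<Rightarrow> 'a set"
  assumes "parity_complex C dim mn pl" and "x \<in> C"
  shows "setmn pl (pl x) \<inter> setmn mn (mn x) = {}
    \<and> setmn pl (mn x) \<inter> setmn mn (pl x) = {}
    \<and> setmn mn (mn x) - setmn pl (mn x) = setmn mn (mn x) \<inter> setmn mn (pl x)
    \<and> setmn mn (pl x) - setmn pl (pl x) = setmn mn (mn x) \<inter> setmn mn (pl x)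
    \<and> setmn pl (mn x) - setmn mn (mn x) = setmn pl (mn x) \<inter> setmn pl (pl x)
    \<and> setmn pl (pl x) - setmn mn (pl x) = setmn pl (mn x) \<inter> setmn pl (pl x)"
proof -
  have axiom1: "setmn pl (pl x) \<union> setmn mn (mn x) = setmn pl (mn x) \<union> setmn mn (pl x)"
    using assms unfolding parity_complex_def by blast
  note disjoint = parity_complex_double_faces_disjoint[OF assms]
  show ?thesis
    using disjoint union_eq_disjoint_diff[OF axiom1 disjoint] by blast
qed

end
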